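(* Fix $b>0$. Let $(a_n)_{n\in\mathbb{N}}$ be real numbers with $a_1=0$ and $a_n=q_n+\sum_{m=2}^{n-1}p^{(1)}_{n,m}a_m$ for $n\ge2$, for a given real sequence $(q_n)_{n\ge2}$. If $q_n=O(n^{\alpha-1}/\log^{p-1}n)$ for some constants $\alpha\in(0,\infty)$ and $p\in[0,\infty)$, then $a_n=O(n^\alpha/\log^p n)$.
   Context: For the $\mathrm{Beta}(1,b)$-coalescent, i.e. $\Lambda(dx)=b(1-x)^{b-1}dx$ on $[0,1]$, set $\lambda_{n,k}=\int_0^1x^{k-2}(1-x)^{n-k}\Lambda(dx)$ and $\lambda_n=\sum_{k=2}^n\binom nk\lambda_{n,k}$. The first decrement $I_n$ of the block-counting process started at $n$ has law $\mathbb{P}\{I_n=k\}=\binom{n}{k+1}\lambda_{n,k+1}/\lambda_n$, $1\le k\le n-1$, and $p^{(1)}_{n,m}:=\mathbb{P}\{I_n=n-m\}$ for $1\le m\le n-1$. *)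

theory Defs
  imports "HOL-Analysis.Analysis" "HOL-Library.Landau_Symbols"
begin

text \<open>Beta(1,b)-coalescent: Lambda(dx) = b (1-x)^(b-1) dx on [0,1].\<close>

definition lam_nk :: "real \<Rightarrow> nat \<Rightarrow> nat \<Rightarrow> real" where
  "lam_nk b n k = integral {0..1}
     (\<lambda>x::real. x ^ (k - 2) * (1 - x) ^ (n - k) * (b * (1 - x) powr (b - 1)))"

definition lam_n :: "real \<Rightarrow> nat \<Rightarrow> real" where
  "lam_n b n = (\<Sum>k=2..n. real (n choose k) * lam_nk b n k)"

definition first_dec_prob :: "real \<Rightarrow> nat \<Rightarrow> nat \<Rightarrow> real" where
  "first_dec_prob b n k = real (n choose (k + 1)) * lam_nk b n (k + 1) / lam_n b n"

definition p1 :: "real \<Rightarrow> nat \<Rightarrow> nat \<Rightarrow> real" where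
  "p1 b n m = first_dec_prob b n (n - m)"

end

theory Submission
  imports Defs "HOL-Real_Asymp.Real_Asymp"
begin

text \<open>
  By the Beta integral, \<open>p1 b n (n - k)\<close> is proportional to
  \<open>decrement_weight b n k = \<Gamma>(n - k - 1 + b) / ((n - k - 1)! k (k + 1))\<close>.
  For \<open>k \<le> n / 2\<close> the numerator stays within constant factors of its value at \<open>k = n / 2\<close>,
  so the total weight is of that order, whereas the first moment \<open>\<Sum>\<^sub>k\<^sub>\<le>\<^sub>n\<^sub>/\<^sub>2 k w\<^sub>k\<close>
  is larger by a factor of order \<open>ln n\<close>. The function \<open>F(x) = x\<^sup>\<alpha> / ln\<^sup>p x\<close> is eventually
  increasing and loses about \<open>k F(n) / n\<close> when \<open>n\<close> drops by \<open>k \<le> n / 2\<close>; hence the expected value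
  of \<open>F\<close> after the first decrement is at most \<open>F(n) - c F(n) ln n / n\<close> for large \<open>n\<close>.
  Since \<open>q\<^sub>n = O(F(n) ln n / n)\<close>, the bound \<open>|a\<^sub>n| \<le> C F(n)\<close> then propagates by strong
  induction for \<open>C\<close> large enough.
\<close>

section \<open>The law of the first decrement\<close>

lemma lam_nk_Suc_eq_Beta:
  assumes b: "b > 0" and k: "1 \<le> k" "k < n"
  shows "lam_nk b n (Suc k) = b * Beta (real k) (real (n - Suc k) + b)"
proof -
  have "((\<lambda>x. x ^ (Suc k - 2) * (1 - x) ^ (n - Suc k) * (b * (1 - x) powr (b - 1)))
      has_integral b * Beta (real k) (real (n - Suc k) + b)) {0..1}"
  proof (rule has_integral_spike_finite[where S = "{0, 1}"])
    show "((\<lambda>x. b * (x powr (real k - 1) * (1 - x) powr (real (n - Suc k) + b - 1)))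
        has_integral b * Beta (real k) (real (n - Suc k) + b)) {0..1}"
      using k b by (intro has_integral_mult_right has_integral_Beta_real) auto
  next
    fix x :: real assume x: "x \<in> {0..1} - {0, 1}"
    have "x ^ (k - 1) = x powr real (k - 1)"
      using x by (simp add: powr_realpow)
    also have "real (k - 1) = real k - 1"
      using k by simp
    finally have "x ^ (k - 1) = x powr (real k - 1)" .
    moreover have "(1 - x) ^ (n - Suc k) * (1 - x) powr (b - 1) = (1 - x) powr (real (n - Suc k) + b - 1)"
      using x by (simp add: powr_realpow [symmetric] powr_add [symmetric] add_diff_eq)
    ultimately show "x ^ (Suc k - 2) * (1 - x) ^ (n - Suc k) * (b * (1 - x) powr (b - 1))
        = b * (x powr (real k - 1) * (1 - x) powr (real (n - Suc k) + b - 1))"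
      by (simp add: mult_ac)
  qed simp
  then show ?thesis
    unfolding lam_nk_def by (rule integral_unique)
qed

definition Gamma_over_fact :: "real \<Rightarrow> nat \<Rightarrow> real" where
  "Gamma_over_fact b j = Gamma (real j + b) / fact j"

lemma binomial_lam_nk_Suc:
  assumes b: "b > 0" and k: "1 \<le> k" "k < n"
  shows "real (n choose Suc k) * lam_nk b n (Suc k)
    = b * fact n / Gamma (real n - 1 + b) * (Gamma_over_fact b (n - Suc k) / (real k * (real k + 1)))"
proof -
  obtain i where i: "k = Suc i" using k by (cases k) auto
  have fact_k: "fact (Suc k) = real k * (real k + 1) * fact i"
    by (simp add: i fact_Suc algebra_simps)
  have binom: "real (n choose Suc k) = fact n / (fact (Suc k) * fact (n - Suc k))"
    using k by (simp add: binomial_fact)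
  have Gamma_k: "Gamma (real k) = fact i"
    using Gamma_fact[of i, where 'a = real] by (simp add: i add.commute)
  have sum: "real k + (real (n - Suc k) + b) = real n - 1 + b"
    using k by (simp add: of_nat_diff)
  have "Gamma (real n - 1 + b) \<noteq> 0" using k b by (intro less_imp_neq[symmetric] Gamma_real_pos) simp
  moreover have "fact i \<noteq> (0::real)" "fact (n - Suc k) \<noteq> (0::real)" "real k * (real k + 1) \<noteq> 0"
    using k by auto
  ultimately show ?thesis
    unfolding lam_nk_Suc_eq_Beta[OF assms] Beta_def Gamma_over_fact_def binom fact_k Gamma_k sum
    by (simp add: divide_simps)
qed

definition decrement_weight :: "real \<Rightarrow> nat \<Rightarrow> nat \<Rightarrow> real" where
  "decrement_weight b n k = Gamma_over_fact b (n - Suc k) / (real k * (real k + 1))"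

lemma Gamma_over_fact_pos: "b > 0 \<Longrightarrow> Gamma_over_fact b j > 0"
  unfolding Gamma_over_fact_def by (intro divide_pos_pos Gamma_real_pos) auto

lemma decrement_weight_pos: "b > 0 \<Longrightarrow> k \<ge> 1 \<Longrightarrow> decrement_weight b n k > 0"
  unfolding decrement_weight_def using Gamma_over_fact_pos by (intro divide_pos_pos) auto

lemma lam_n_eq:
  assumes b: "b > 0" and n: "n \<ge> 2"
  shows "lam_n b n = b * fact n / Gamma (real n - 1 + b) * (\<Sum>k=1..n-1. decrement_weight b n k)"
proof -
  have "lam_n b n = (\<Sum>k=Suc 1..Suc (n-1). real (n choose k) * lam_nk b n k)"
    unfolding lam_n_def using n by (simp add: numeral_2_eq_2)
  also have "\<dots> = (\<Sum>k=1..n-1. real (n choose Suc k) * lam_nk b n (Suc k))"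
    by (rule sum.shift_bounds_cl_Suc_ivl)
  also have "\<dots> = (\<Sum>k=1..n-1. b * fact n / Gamma (real n - 1 + b) * decrement_weight b n k)"
    by (intro sum.cong refl) (use b in \<open>auto simp: binomial_lam_nk_Suc decrement_weight_def\<close>)
  finally show ?thesis
    by (simp add: sum_distrib_left)
qed

lemma p1_eq:
  assumes b: "b > 0" and m: "1 \<le> m" "m < n"
  shows "p1 b n m = decrement_weight b n (n - m) / (\<Sum>k=1..n-1. decrement_weight b n k)"
proof -
  have n: "n \<ge> 2" using m by simp
  have "Gamma (real n - 1 + b) > 0" "fact n > (0::real)"
    using m b by (auto intro: Gamma_real_pos)
  moreover have "real (n choose Suc (n - m)) * lam_nk b n (Suc (n - m))
      = b * fact n / Gamma (real n - 1 + b) * decrement_weight b n (n - m)"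
    using binomial_lam_nk_Suc[OF b, of "n - m" n] m by (simp add: decrement_weight_def)
  ultimately show ?thesis
    unfolding p1_def first_dec_prob_def lam_n_eq[OF b n] using b by simp
qed

lemma p1_nonneg:
  assumes "b > 0" "1 \<le> m" "m < n"
  shows "p1 b n m \<ge> 0"
proof -
  have "decrement_weight b n k \<ge> 0" if "k \<ge> 1" for k
    using decrement_weight_pos[OF \<open>b > 0\<close> that] by (rule less_imp_le)
  then show ?thesis
    unfolding p1_eq[OF assms] using assms by (auto intro!: divide_nonneg_nonneg sum_nonneg)
qed

lemma sum_p1_mult_eq:
  assumes b: "b > 0" and n: "n \<ge> 2"
  shows "(\<Sum>m=2..n-1. p1 b n m * f m)
    = (\<Sum>k=1..n-2. decrement_weight b n k * f (n - k)) / (\<Sum>k=1..n-1. decrement_weight b n k)"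
proof -
  have "(\<Sum>m=2..n-1. p1 b n m * f m)
      = (\<Sum>m=2..n-1. decrement_weight b n (n - m) * f m) / (\<Sum>k=1..n-1. decrement_weight b n k)"
    unfolding sum_divide_distrib by (intro sum.cong) (auto simp: p1_eq[OF b])
  also have "(\<Sum>m=2..n-1. decrement_weight b n (n - m) * f m) = (\<Sum>k=1..n-2. decrement_weight b n k * f (n - k))"
    by (rule sum.reindex_bij_witness[where i="\<lambda>k. n - k" and j="\<lambda>m. n - m"]) (use n in auto)
  finally show ?thesis .
qed

section \<open>Estimates for \<open>\<Gamma>(j + b) / j!\<close>\<close>

lemma Gamma_over_fact_Suc:
  assumes "b > 0"
  shows "Gamma_over_fact b (Suc j) = Gamma_over_fact b j * (real j + b) / (real j + 1)"
proof -
  have "real j + b \<notin> \<int>\<^sub>\<le>\<^sub>0"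
    using assms by (auto dest: nonpos_Ints_nonpos)
  then have "Gamma (real (Suc j) + b) = (real j + b) * Gamma (real j + b)"
    using Gamma_plus1[of "real j + b"] by (simp add: add_ac)
  then show ?thesis
    by (simp add: Gamma_over_fact_def field_simps)
qed

lemma sum_Gamma_over_fact:
  assumes b: "b > 0"
  shows "(\<Sum>j<J. Gamma_over_fact b j) = real J * Gamma_over_fact b J / b"
proof (induction J)
  case (Suc J)
  have "real (Suc J) * Gamma_over_fact b (Suc J) = (real J + b) * Gamma_over_fact b J"
    by (simp add: Gamma_over_fact_Suc[OF b] field_simps)
  with Suc b show ?case
    by (simp add: field_simps)
qed simp

lemma Gamma_over_fact_shift_le:
  assumes b: "b > 0"
  shows "Gamma_over_fact b (J + m) \<le> Gamma_over_fact b J * exp (b * real m / (real J + 1))"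
proof (induction m)
  case (Suc m)
  define i where "i = J + m"
  have "(real i + b) / (real i + 1) \<le> exp ((real i + b) / (real i + 1) - 1)"
    using exp_ge_add_one_self[of "(real i + b) / (real i + 1) - 1"] by simp
  also have "(real i + b) / (real i + 1) - 1 = (b - 1) / (real i + 1)"
    by (simp add: field_simps)
  also have "(b - 1) / (real i + 1) \<le> b / (real J + 1)"
    using b by (simp add: i_def frac_le)
  finally have step: "(real i + b) / (real i + 1) \<le> exp (b / (real J + 1))"
    by simp
  have "Gamma_over_fact b (J + Suc m) = Gamma_over_fact b i * ((real i + b) / (real i + 1))"
    by (simp add: i_def Gamma_over_fact_Suc[OF b])
  also have "\<dots> \<le> Gamma_over_fact b J * exp (b * real m / (real J + 1)) * exp (b / (real J + 1))"
    using Suc step b Gamma_over_fact_pos[OF b, of i] unfolding i_def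
    by (intro mult_mono) auto
  also have "\<dots> = Gamma_over_fact b J * exp (b * real (Suc m) / (real J + 1))"
    by (simp add: mult.assoc exp_add[symmetric] add_divide_distrib algebra_simps)
  finally show ?case .
qed simp

lemma Gamma_over_fact_shift_ge:
  assumes b: "b > 0"
  shows "Gamma_over_fact b J * exp (- real m / (b * (real J + 1))) \<le> Gamma_over_fact b (J + m)"
proof (induction m)
  case (Suc m)
  define i where "i = J + m"
  have "- 1 / (b * (real J + 1)) \<le> (b - 1) / (real i + b)"
  proof (cases "b \<ge> 1")
    case False
    have "b * (real J + 1) \<le> b * (real i + 1)"
      using b by (simp add: i_def)
    also have "\<dots> \<le> real i + b"
      using False b mult_left_le_one_le[of "real i" b] by (simp add: algebra_simps)
    finally have "1 / (real i + b) \<le> 1 / (b * (real J + 1))"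
      using b by (intro divide_left_mono) auto
    moreover have "(b - 1) / (real i + b) \<ge> - 1 / (real i + b)"
      using b by (intro divide_right_mono) auto
    ultimately show ?thesis
      by (simp add: minus_divide_left [symmetric] del: minus_divide_left)
  qed (use b in \<open>auto intro: order_trans[of _ 0] simp: divide_nonpos_pos\<close>)
  also have "(b - 1) / (real i + b) = - ((real i + 1) / (real i + b) - 1)"
    using b by (simp add: field_simps)
  also have "\<dots> \<le> ln ((real i + b) / (real i + 1))"
    using ln_le_minus_one[of "(real i + 1) / (real i + b)"] b by (simp add: ln_div)
  finally have step: "exp (- 1 / (b * (real J + 1))) \<le> (real i + b) / (real i + 1)"
    using b by (simp add: ln_ge_iff)
  have "Gamma_over_fact b J * exp (- real (Suc m) / (b * (real J + 1)))
      = Gamma_over_fact b J * exp (- real m / (b * (real J + 1))) * exp (- 1 / (b * (real J + 1)))"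
    by (simp add: mult.assoc exp_add[symmetric] add_divide_distrib algebra_simps diff_divide_distrib)
  also have "\<dots> \<le> Gamma_over_fact b i * ((real i + b) / (real i + 1))"
    using Suc step Gamma_over_fact_pos[OF b, of i] unfolding i_def
    by (intro mult_mono) auto
  also have "\<dots> = Gamma_over_fact b (J + Suc m)"
    by (simp add: i_def Gamma_over_fact_Suc[OF b])
  finally show ?case .
qed simp

lemma Gamma_over_fact_near_half:
  assumes b: "b > 0" and k: "k \<le> n div 2"
  shows "Gamma_over_fact b (n - n div 2 - 1) * exp (- 1 / b) \<le> Gamma_over_fact b (n - Suc k)"
    and "Gamma_over_fact b (n - Suc k) \<le> Gamma_over_fact b (n - n div 2 - 1) * exp b"
proof -
  define J where "J = n - n div 2 - 1"
  have shift: "n - Suc k = J + (n div 2 - k)" and close: "real (n div 2 - k) \<le> real J + 1"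
    using k by (auto simp: J_def)
  have "real (n div 2 - k) / (b * (real J + 1)) \<le> (real J + 1) / (b * (real J + 1))"
    using close b by (intro divide_right_mono) auto
  then have "exp (- 1 / b) \<le> exp (- real (n div 2 - k) / (b * (real J + 1)))"
    using b by simp
  then show "Gamma_over_fact b J * exp (- 1 / b) \<le> Gamma_over_fact b (n - Suc k)"
    unfolding shift using Gamma_over_fact_shift_ge[OF b] Gamma_over_fact_pos[OF b]
    by (meson mult_left_mono less_imp_le order_trans)
  have "b * real (n div 2 - k) \<le> b * (real J + 1)"
    using close b by simp
  then have "exp (b * real (n div 2 - k) / (real J + 1)) \<le> exp b"
    by (simp add: pos_divide_le_eq)
  then show "Gamma_over_fact b (n - Suc k) \<le> Gamma_over_fact b J * exp b"
    unfolding shift using Gamma_over_fact_shift_le[OF b] Gamma_over_fact_pos[OF b]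
    by (meson mult_left_mono less_imp_le order_trans)
qed

lemma sum_inverse_consecutive_products:
  "(\<Sum>k=1..K. 1 / (real k * (real k + 1))) = 1 - 1 / (real K + 1)"
proof -
  have "(\<Sum>k=1..K. 1 / (real k * (real k + 1))) = (\<Sum>k=1..K. - 1 / real (Suc k) - - 1 / real k)"
    by (intro sum.cong) (auto simp: field_simps)
  also have "\<dots> = 1 - 1 / (real K + 1)"
    by (subst sum_Suc_diff) auto
  finally show ?thesis .
qed

lemma sum_decrement_weight_le:
  assumes b: "b > 0" and n: "n \<ge> 2"
  shows "(\<Sum>k=1..n-1. decrement_weight b n k) \<le> Gamma_over_fact b (n - n div 2 - 1) * (exp b + 1 / b)"
proof -
  define K where "K = n div 2"
  define J where "J = n - K - 1"
  have KJ: "1 \<le> K" "K \<le> n - 1" "J \<le> K + 1" using n by (auto simp: K_def J_def)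
  have rJ: "Gamma_over_fact b J > 0" by (rule Gamma_over_fact_pos[OF b])
  have "(\<Sum>k=1..K. decrement_weight b n k)
      \<le> (\<Sum>k=1..K. Gamma_over_fact b J * exp b * (1 / (real k * (real k + 1))))"
    using Gamma_over_fact_near_half(2)[OF b]
    by (intro sum_mono) (auto simp: decrement_weight_def K_def J_def divide_right_mono)
  also have "\<dots> = Gamma_over_fact b J * exp b * (1 - 1 / (real K + 1))"
    by (simp only: sum_distrib_left[symmetric] sum_inverse_consecutive_products)
  also have "\<dots> \<le> Gamma_over_fact b J * exp b"
    using rJ by (simp add: mult_left_le)
  finally have low: "(\<Sum>k=1..K. decrement_weight b n k) \<le> Gamma_over_fact b J * exp b" .
  have "(\<Sum>k=K+1..n-1. decrement_weight b n k)
      \<le> (\<Sum>k=K+1..n-1. Gamma_over_fact b (n - Suc k) / ((real K + 1) * (real K + 2)))"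
    unfolding decrement_weight_def
    by (intro sum_mono divide_left_mono mult_mono less_imp_le[OF Gamma_over_fact_pos[OF b]]) auto
  also have "\<dots> = (\<Sum>j<J. Gamma_over_fact b j) / ((real K + 1) * (real K + 2))"
    unfolding sum_divide_distrib[symmetric] using KJ
    by (intro arg_cong2[where f = "(/)"] refl
        sum.reindex_bij_witness[where i = "\<lambda>j. n - j - 1" and j = "\<lambda>k. n - k - 1"])
      (auto simp: J_def)
  also have "\<dots> = Gamma_over_fact b J / b * (real J / ((real K + 1) * (real K + 2)))"
    by (simp add: sum_Gamma_over_fact[OF b])
  also have "\<dots> \<le> Gamma_over_fact b J / b"
  proof (intro mult_left_le)
    have "real J \<le> (real K + 1) * 1" using KJ by simp
    also have "\<dots> \<le> (real K + 1) * (real K + 2)" by (intro mult_left_mono) auto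
    finally have "real J \<le> (real K + 1) * (real K + 2)" .
    then show "real J / ((real K + 1) * (real K + 2)) \<le> 1"
      by simp
  qed (use rJ b in simp_all)
  finally have high: "(\<Sum>k=K+1..n-1. decrement_weight b n k) \<le> Gamma_over_fact b J / b" .
  have "{1..n-1} = {1..K} \<union> {K+1..n-1}" using KJ by auto
  then have "(\<Sum>k=1..n-1. decrement_weight b n k)
      = (\<Sum>k=1..K. decrement_weight b n k) + (\<Sum>k=K+1..n-1. decrement_weight b n k)"
    by (simp add: sum.union_disjoint)
  with low high show ?thesis
    unfolding K_def J_def by (simp add: algebra_simps)
qed

lemma sum_decrement_weight_first_moment_ge:
  assumes b: "b > 0" and n: "n \<ge> 1"
  shows "Gamma_over_fact b (n - n div 2 - 1) * exp (- 1 / b) * (ln (real n) / 4)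
    \<le> (\<Sum>k=1..n div 2. real k * decrement_weight b n k)"
proof -
  define K where "K = n div 2"
  define c where "c = Gamma_over_fact b (n - K - 1) * exp (- 1 / b)"
  have c: "c > 0" using Gamma_over_fact_pos[OF b] by (simp add: c_def)
  have "real n \<le> 2 * real K + 1" unfolding K_def by linarith
  also have "\<dots> \<le> (real K + 1) ^ 2" by (simp add: power2_eq_square algebra_simps)
  finally have "ln (real n) \<le> ln ((real K + 1) ^ 2)" using n by simp
  also have "\<dots> \<le> 2 * harm K"
    using ln_le_harm[of K] by (simp add: ln_realpow)
  also have "harm K = (\<Sum>k=1..K. 1 / real k)"
    by (simp add: harm_def inverse_eq_divide)
  also have "\<dots> \<le> (\<Sum>k=1..K. 2 * (1 / (real k + 1)))"
    by (intro sum_mono) (auto simp: field_simps)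
  finally have harmonic: "ln (real n) / 4 \<le> (\<Sum>k=1..K. 1 / (real k + 1))"
    unfolding sum_distrib_left[symmetric] by linarith
  have "c * (ln (real n) / 4) \<le> (\<Sum>k=1..K. c * (1 / (real k + 1)))"
    using mult_left_mono[OF harmonic, of c] c by (simp add: sum_distrib_left)
  also have "\<dots> \<le> (\<Sum>k=1..K. real k * decrement_weight b n k)"
    using Gamma_over_fact_near_half(1)[OF b]
    by (intro sum_mono) (auto simp: c_def K_def decrement_weight_def divide_right_mono)
  finally show ?thesis
    unfolding c_def K_def .
qed

section \<open>The function \<open>x\<^sup>\<alpha> / ln\<^sup>p x\<close>\<close>

definition power_log_ratio :: "real \<Rightarrow> real \<Rightarrow> real \<Rightarrow> real" where
  "power_log_ratio \<alpha> p x = x powr \<alpha> / ln x powr p"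

lemma power_log_ratio_eq_exp:
  "x > 1 \<Longrightarrow> power_log_ratio \<alpha> p x = exp (\<alpha> * ln x - p * ln (ln x))"
  unfolding power_log_ratio_def powr_def by (simp add: exp_diff mult.commute)

lemma power_log_ratio_pos: "x > 1 \<Longrightarrow> power_log_ratio \<alpha> p x > 0"
  by (simp add: power_log_ratio_eq_exp)

lemma power_log_ratio_shift:
  assumes "x > 1"
  shows "x powr (\<alpha> - 1) / ln x powr (p - 1) = power_log_ratio \<alpha> p x * ln x / x"
  using assms by (simp add: power_log_ratio_def powr_diff)

lemma power_log_ratio_growth:
  assumes \<alpha>: "\<alpha> > 0" and p: "p \<ge> 0" and m: "1 < m" "m \<le> x" and ln_m: "2 * p / \<alpha> \<le> ln m"
  shows "power_log_ratio \<alpha> p m * (1 + \<alpha> / 2 * (ln x - ln m)) \<le> power_log_ratio \<alpha> p x"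
proof -
  define d where "d = ln x - ln m"
  define e where "e = (\<alpha> * ln x - p * ln (ln x)) - (\<alpha> * ln m - p * ln (ln m))"
  have "ln m > 0" "d \<ge> 0" using m by (auto simp: d_def)
  have "ln (ln x) - ln (ln m) = ln (ln x / ln m)"
    using \<open>ln m > 0\<close> m by (simp add: ln_div)
  also have "\<dots> \<le> ln x / ln m - 1"
    using \<open>ln m > 0\<close> m by (intro ln_le_minus_one) simp
  also have "\<dots> = d / ln m"
    using \<open>ln m > 0\<close> by (simp add: d_def diff_divide_distrib)
  finally have "p * (ln (ln x) - ln (ln m)) \<le> p * (d / ln m)"
    using p by (rule mult_left_mono)
  also have "\<dots> = p / ln m * d"
    by simp
  also have "\<dots> \<le> \<alpha> / 2 * d"
  proof (rule mult_right_mono [OF _ \<open>d \<ge> 0\<close>])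
    show "p / ln m \<le> \<alpha> / 2"
      using ln_m \<alpha> \<open>ln m > 0\<close> by (simp add: pos_divide_le_eq pos_le_divide_eq mult.commute)
  qed
  finally have "1 + \<alpha> / 2 * d \<le> 1 + e"
    unfolding d_def e_def right_diff_distrib by linarith
  also have "\<dots> \<le> exp e"
    by (rule exp_ge_add_one_self)
  finally have "power_log_ratio \<alpha> p m * (1 + \<alpha> / 2 * d) \<le> power_log_ratio \<alpha> p m * exp e"
    using m power_log_ratio_pos[of m \<alpha> p] by (intro mult_left_mono) auto
  also have "\<dots> = power_log_ratio \<alpha> p x"
    using m by (simp add: e_def power_log_ratio_eq_exp mult_exp_exp)
  finally show ?thesis
    by (simp add: d_def)
qed

lemma power_log_ratio_mono:
  assumes "\<alpha> > 0" "p \<ge> 0" "1 < m" "m \<le> x" "2 * p / \<alpha> \<le> ln m"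
  shows "power_log_ratio \<alpha> p m \<le> power_log_ratio \<alpha> p x"
proof -
  have "power_log_ratio \<alpha> p m * 1 \<le> power_log_ratio \<alpha> p m * (1 + \<alpha> / 2 * (ln x - ln m))"
    using assms power_log_ratio_pos[of m \<alpha> p] by (intro mult_left_mono) auto
  with power_log_ratio_growth[OF assms] show ?thesis
    by simp
qed

lemma power_log_ratio_gap:
  assumes \<alpha>: "\<alpha> > 0" and p: "p \<ge> 0" and m: "1 < m" "x / 2 \<le> m" "m \<le> x"
    and ln_m: "2 * p / \<alpha> \<le> ln m"
  shows "\<alpha> * power_log_ratio \<alpha> p x * (x - m) / (2 * 2 powr \<alpha> * x)
    \<le> power_log_ratio \<alpha> p x - power_log_ratio \<alpha> p m"
proof -
  define F where "F = power_log_ratio \<alpha> p"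
  have "F x / 2 powr \<alpha> = (x / 2) powr \<alpha> / ln x powr p"
    using m by (simp add: F_def power_log_ratio_def powr_divide)
  also have "\<dots> \<le> m powr \<alpha> / ln m powr p"
    using m \<alpha> p by (intro frac_le powr_mono2) auto
  finally have half: "F x / 2 powr \<alpha> \<le> F m"
    by (simp add: F_def power_log_ratio_def)
  have "ln (m / x) \<le> m / x - 1"
    using m by (intro ln_le_minus_one) auto
  then have "(x - m) / x \<le> ln x - ln m"
    using m by (simp add: ln_div diff_divide_distrib)
  then have "F m * (\<alpha> / 2 * ((x - m) / x)) \<le> F m * (\<alpha> / 2 * (ln x - ln m))"
    using \<alpha> m power_log_ratio_pos[of m \<alpha> p] by (intro mult_left_mono) (auto simp: F_def)
  also have "\<dots> \<le> F x - F m"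
    using power_log_ratio_growth[OF \<alpha> p m(1) m(3) ln_m] by (simp add: F_def algebra_simps)
  finally have "F m * (\<alpha> / 2 * ((x - m) / x)) \<le> F x - F m" .
  moreover have "F x / 2 powr \<alpha> * (\<alpha> / 2 * ((x - m) / x)) \<le> F m * (\<alpha> / 2 * ((x - m) / x))"
    using half \<alpha> m by (intro mult_right_mono) auto
  moreover have "\<alpha> * F x * (x - m) / (2 * 2 powr \<alpha> * x)
      = F x / 2 powr \<alpha> * (\<alpha> / 2 * ((x - m) / x))"
    by (simp add: mult_ac)
  ultimately show ?thesis
    unfolding F_def by linarith
qed

section \<open>The drift inequality\<close>

lemma weighted_gap_sum_ge:
  fixes w f :: "nat \<Rightarrow> real"
  assumes K: "K \<le> n - 2" and n: "n \<ge> 2"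
    and w: "\<And>k. 1 \<le> k \<Longrightarrow> k < n \<Longrightarrow> w k \<ge> 0"
    and dominated: "\<And>k. 1 \<le> k \<Longrightarrow> k \<le> n - 2 \<Longrightarrow> f (n - k) \<le> f n"
    and f_n: "f n \<ge> 0"
    and gap: "\<And>k. 1 \<le> k \<Longrightarrow> k \<le> K \<Longrightarrow> A * real k \<le> f n - f (n - k)"
  shows "A * (\<Sum>k=1..K. real k * w k) \<le> f n * (\<Sum>k=1..n-1. w k) - (\<Sum>k=1..n-2. w k * f (n - k))"
proof -
  have "A * (\<Sum>k=1..K. real k * w k) \<le> (\<Sum>k=1..K. w k * (f n - f (n - k)))"
    unfolding sum_distrib_left
  proof (intro sum_mono)
    fix k assume k: "k \<in> {1..K}"
    then have "w k * (A * real k) \<le> w k * (f n - f (n - k))"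
      using gap w K by (intro mult_left_mono) auto
    then show "A * (real k * w k) \<le> w k * (f n - f (n - k))"
      by (simp add: mult_ac)
  qed
  also have "\<dots> \<le> (\<Sum>k=1..n-2. w k * (f n - f (n - k)))"
    using K w dominated by (intro sum_mono2) auto
  also have "\<dots> \<le> (\<Sum>k=1..n-2. w k * (f n - f (n - k))) + w (n - 1) * f n"
    using w[of "n - 1"] n f_n by simp
  also have "\<dots> = f n * (\<Sum>k=1..n-1. w k) - (\<Sum>k=1..n-2. w k * f (n - k))"
  proof -
    obtain j where j: "n = Suc (Suc j)" using n by (metis add_2_eq_Suc le_Suc_ex)
    show ?thesis
      by (simp add: j algebra_simps sum_distrib_left sum_subtractf)
  qed
  finally show ?thesis .
qed

lemma power_log_ratio_decrement_gap:
  assumes \<alpha>: "\<alpha> > 0" and p: "p \<ge> 0" and n: "n \<ge> 4"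
    and ln_half: "2 * p / \<alpha> \<le> ln (real n / 2)" and k: "k \<le> n div 2"
  shows "\<alpha> * power_log_ratio \<alpha> p (real n) / (2 * 2 powr \<alpha> * real n) * real k
    \<le> power_log_ratio \<alpha> p (real n) - power_log_ratio \<alpha> p (real (n - k))"
proof -
  have "2 * k \<le> n" using k by simp
  then have half: "real n / 2 \<le> real (n - k)" and two: "2 \<le> real (n - k)"
    using n by (simp_all add: of_nat_diff)
  have "ln (real n / 2) \<le> ln (real (n - k))"
    using half n by (subst ln_le_cancel_iff) auto
  then have "2 * p / \<alpha> \<le> ln (real (n - k))"
    using ln_half by linarith
  then have "\<alpha> * power_log_ratio \<alpha> p (real n) * (real n - real (n - k)) / (2 * 2 powr \<alpha> * real n)
      \<le> power_log_ratio \<alpha> p (real n) - power_log_ratio \<alpha> p (real (n - k))"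
    using half two by (intro power_log_ratio_gap[OF \<alpha> p]) auto
  then show ?thesis
    using \<open>2 * k \<le> n\<close> by (simp add: of_nat_diff mult_ac)
qed

lemma power_log_ratio_deficit_ge:
  fixes b \<alpha> p :: real and n :: nat
  defines "F \<equiv> power_log_ratio \<alpha> p"
  assumes b: "b > 0" and \<alpha>: "\<alpha> > 0" and p: "p \<ge> 0" and n: "n \<ge> 4"
    and ln_half: "2 * p / \<alpha> \<le> ln (real n / 2)"
    and dominated: "\<And>m. 2 \<le> m \<Longrightarrow> m < n \<Longrightarrow> F (real m) \<le> F (real n)"
  shows "\<alpha> * F (real n) / (2 * 2 powr \<alpha> * real n) * (\<Sum>k=1..n div 2. real k * decrement_weight b n k)
    \<le> F (real n) * (\<Sum>k=1..n-1. decrement_weight b n k)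
      - (\<Sum>k=1..n-2. decrement_weight b n k * F (real (n - k)))"
proof (rule weighted_gap_sum_ge[where f = "\<lambda>j. F (real j)"])
  show "n div 2 \<le> n - 2" "2 \<le> n" "0 \<le> F (real n)"
    using n power_log_ratio_pos[of "real n" \<alpha> p] by (auto simp: F_def)
  show "0 \<le> decrement_weight b n k" if "1 \<le> k" "k < n" for k
    using decrement_weight_pos[OF b that(1)] by (rule less_imp_le)
  show "F (real (n - k)) \<le> F (real n)" if "1 \<le> k" "k \<le> n - 2" for k
    using that by (intro dominated) auto
  show "\<alpha> * F (real n) / (2 * 2 powr \<alpha> * real n) * real k \<le> F (real n) - F (real (n - k))"
    if "1 \<le> k" "k \<le> n div 2" for k
    unfolding F_def using power_log_ratio_decrement_gap[OF \<alpha> p n ln_half that(2)] .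
qed

lemma p1_drift:
  fixes b \<alpha> p :: real and n :: nat
  defines "F \<equiv> power_log_ratio \<alpha> p"
  assumes b: "b > 0" and \<alpha>: "\<alpha> > 0" and p: "p \<ge> 0" and n: "n \<ge> 4"
    and ln_half: "2 * p / \<alpha> \<le> ln (real n / 2)"
    and dominated: "\<And>m. 2 \<le> m \<Longrightarrow> m < n \<Longrightarrow> F (real m) \<le> F (real n)"
  shows "(\<Sum>m=2..n-1. p1 b n m * F (real m))
    \<le> F (real n) - \<alpha> * exp (- 1 / b) / (8 * 2 powr \<alpha> * (exp b + 1 / b)) * (F (real n) * ln (real n) / real n)"
proof -
  define U where "U = (\<Sum>k=1..n-1. decrement_weight b n k)"
  define S where "S = (\<Sum>k=1..n-2. decrement_weight b n k * F (real (n - k)))"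
  define r where "r = Gamma_over_fact b (n - n div 2 - 1)"
  define A where "A = \<alpha> * F (real n) / (2 * 2 powr \<alpha> * real n)"
  define E where "E = exp b + 1 / b"
  define D where "D = \<alpha> * exp (- 1 / b) / (8 * 2 powr \<alpha> * E) * (F (real n) * ln (real n) / real n)"
  have U: "U > 0"
    unfolding U_def using n decrement_weight_pos[OF b] by (intro sum_pos) auto
  have pos: "F (real n) > 0" "E > 0" "real n > 0"
    unfolding F_def E_def using n b by (auto intro: power_log_ratio_pos add_pos_pos)
  have "D * U \<le> D * (r * E)"
    unfolding U_def r_def E_def using n pos \<alpha> b
    by (intro mult_left_mono sum_decrement_weight_le[OF b]) (auto simp: D_def E_def)
  also have "\<dots> = A * (r * exp (- 1 / b) * (ln (real n) / 4))"
    using pos unfolding A_def D_def by (simp add: field_simps)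
  also have "\<dots> \<le> A * (\<Sum>k=1..n div 2. real k * decrement_weight b n k)"
    unfolding r_def using n \<alpha> pos
    by (intro mult_left_mono sum_decrement_weight_first_moment_ge[OF b]) (auto simp: A_def)
  also have "\<dots> \<le> F (real n) * U - S"
    unfolding A_def U_def S_def F_def using power_log_ratio_deficit_ge[OF b \<alpha> p n ln_half] dominated
    by (simp add: F_def)
  finally have "S \<le> (F (real n) - D) * U"
    by (simp add: algebra_simps)
  then have "S / U \<le> F (real n) - D"
    by (simp add: pos_divide_le_eq[OF U])
  moreover have "(\<Sum>m=2..n-1. p1 b n m * F (real m)) = S / U"
    unfolding S_def U_def using n by (intro sum_p1_mult_eq[OF b]) simp
  ultimately show ?thesis
    unfolding D_def E_def by simp
qed

lemma eventually_dominates_predecessors: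
  fixes f :: "nat \<Rightarrow> real"
  assumes mono: "\<And>m n. N \<le> m \<Longrightarrow> m \<le> n \<Longrightarrow> f m \<le> f n"
    and lim: "filterlim f at_top sequentially"
  shows "eventually (\<lambda>n. \<forall>m<n. f m \<le> f n) sequentially"
proof -
  have "eventually (\<lambda>n. Max (f ` {..N}) \<le> f n) sequentially"
    using lim unfolding filterlim_at_top by blast
  then have "eventually (\<lambda>n. Max (f ` {..N}) \<le> f n \<and> N \<le> n) sequentially"
    by (intro eventually_conj eventually_ge_at_top)
  then show ?thesis
  proof (rule eventually_mono, intro allI impI)
    fix n m assume n: "Max (f ` {..N}) \<le> f n \<and> N \<le> n" and "m < n"
    show "f m \<le> f n"
    proof (cases "m \<le> N")
      case True
      then have "f m \<le> Max (f ` {..N})" by (intro Max_ge) auto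
      with n show ?thesis by linarith
    next
      case False
      with \<open>m < n\<close> show ?thesis by (intro mono) auto
    qed
  qed
qed

lemma eventually_power_log_ratio_dominates_predecessors:
  assumes "\<alpha> > 0" "p \<ge> 0"
  shows "eventually (\<lambda>n. \<forall>m<n. power_log_ratio \<alpha> p (real m) \<le> power_log_ratio \<alpha> p (real n))
    sequentially"
proof (rule eventually_dominates_predecessors)
  show "power_log_ratio \<alpha> p (real m) \<le> power_log_ratio \<alpha> p (real n)"
    if m: "nat \<lceil>exp (2 * p / \<alpha>)\<rceil> + 2 \<le> m" "m \<le> n" for m n
  proof -
    have "exp (2 * p / \<alpha>) \<le> real m"
      using m(1) by linarith
    then have "2 * p / \<alpha> \<le> ln (real m)"
      using m(1) by (simp add: ln_ge_iff)
    then show ?thesis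
      using m assms by (intro power_log_ratio_mono) auto
  qed
  show "filterlim (\<lambda>n. power_log_ratio \<alpha> p (real n)) at_top sequentially"
    unfolding power_log_ratio_def using assms by real_asymp
qed

lemma eventually_p1_drift:
  assumes b: "b > 0" and \<alpha>: "\<alpha> > 0" and p: "p \<ge> 0"
  shows "\<exists>c>0. eventually (\<lambda>n. (\<Sum>m=2..n-1. p1 b n m * power_log_ratio \<alpha> p (real m))
    \<le> power_log_ratio \<alpha> p (real n) - c * (power_log_ratio \<alpha> p (real n) * ln (real n) / real n))
    sequentially"
proof (intro exI conjI)
  show "\<alpha> * exp (- 1 / b) / (8 * 2 powr \<alpha> * (exp b + 1 / b)) > 0"
    using \<alpha> b by (simp add: add_pos_pos)
  have "eventually (\<lambda>n. 2 * p / \<alpha> \<le> ln (real n / 2)) sequentially"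
    by real_asymp
  with eventually_power_log_ratio_dominates_predecessors[OF \<alpha> p] eventually_ge_at_top[of 4]
  show "eventually (\<lambda>n. (\<Sum>m=2..n-1. p1 b n m * power_log_ratio \<alpha> p (real m))
    \<le> power_log_ratio \<alpha> p (real n) - \<alpha> * exp (- 1 / b) / (8 * 2 powr \<alpha> * (exp b + 1 / b))
      * (power_log_ratio \<alpha> p (real n) * ln (real n) / real n)) sequentially"
    by eventually_elim (intro p1_drift b \<alpha> p; simp)
qed

section \<open>Comparison with a supersolution\<close>

lemma abs_le_by_drift_step:
  fixes a F :: "nat \<Rightarrow> real" and w :: "nat \<Rightarrow> nat \<Rightarrow> real"
  assumes rec: "a n = q n + (\<Sum>m=2..n-1. w n m * a m)"
    and w: "\<And>m. 2 \<le> m \<Longrightarrow> m < n \<Longrightarrow> w n m \<ge> 0"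
    and previous: "\<And>m. m < n \<Longrightarrow> 2 \<le> m \<Longrightarrow> \<bar>a m\<bar> \<le> C * F m"
    and drift: "(\<Sum>m=2..n-1. w n m * F m) \<le> F n - c * G"
    and q: "\<bar>q n\<bar> \<le> K * G" and C: "C \<ge> 0" "C * c \<ge> K" and G: "G \<ge> 0"
  shows "\<bar>a n\<bar> \<le> C * F n"
proof -
  have "(\<Sum>m=2..n-1. \<bar>w n m * a m\<bar>) \<le> (\<Sum>m=2..n-1. w n m * (C * F m))"
  proof (intro sum_mono)
    fix m assume "m \<in> {2..n-1}"
    then have m: "2 \<le> m" "m < n" by auto
    then have "w n m * \<bar>a m\<bar> \<le> w n m * (C * F m)"
      using w previous by (intro mult_left_mono) auto
    then show "\<bar>w n m * a m\<bar> \<le> w n m * (C * F m)"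
      using w[OF m] by (simp add: abs_mult)
  qed
  also have "\<dots> = C * (\<Sum>m=2..n-1. w n m * F m)"
    by (simp add: sum_distrib_left mult_ac)
  also have "\<dots> \<le> C * (F n - c * G)"
    using drift C by (intro mult_left_mono) auto
  finally have "\<bar>a n\<bar> \<le> K * G + C * (F n - c * G)"
    using rec q sum_abs[of "\<lambda>m. w n m * a m" "{2..n-1}"] by (auto simp: abs_le_iff)
  also have "\<dots> = C * F n - (C * c - K) * G"
    by (simp add: algebra_simps)
  also have "\<dots> \<le> C * F n"
    using C G by simp
  finally show ?thesis .
qed

lemma bounded_by_drift_function:
  fixes a q F G :: "nat \<Rightarrow> real" and w :: "nat \<Rightarrow> nat \<Rightarrow> real"
  assumes rec: "\<And>n. n \<ge> 2 \<Longrightarrow> a n = q n + (\<Sum>m=2..n-1. w n m * a m)"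
    and w: "\<And>n m. 2 \<le> m \<Longrightarrow> m < n \<Longrightarrow> w n m \<ge> 0"
    and F: "\<And>n. n \<ge> 2 \<Longrightarrow> F n > 0"
    and c: "c > 0" and G: "\<And>n. n > N \<Longrightarrow> G n \<ge> 0"
    and drift: "\<And>n. n > N \<Longrightarrow> (\<Sum>m=2..n-1. w n m * F m) \<le> F n - c * G n"
    and q: "\<And>n. n > N \<Longrightarrow> \<bar>q n\<bar> \<le> K * G n"
  shows "\<exists>C. \<forall>n\<ge>2. \<bar>a n\<bar> \<le> C * F n"
proof -
  define C where "C = max 0 (K / c) + (\<Sum>m=2..N. \<bar>a m\<bar> / F m)"
  have initial: "\<bar>a n\<bar> / F n \<le> (\<Sum>m=2..N. \<bar>a m\<bar> / F m)" if "2 \<le> n" "n \<le> N" for n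
    using that F by (intro member_le_sum) (auto intro: divide_nonneg_pos)
  have "(\<Sum>m=2..N. \<bar>a m\<bar> / F m) \<ge> 0"
    using F by (intro sum_nonneg) (auto intro: divide_nonneg_pos)
  then have "C \<ge> 0" "C \<ge> K / c"
    by (auto simp: C_def intro: add_increasing order_trans[OF max.cobounded2])
  then have C: "C \<ge> 0" "C * c \<ge> K"
    using c by (simp_all add: pos_divide_le_eq)
  have "\<bar>a n\<bar> \<le> C * F n" if "n \<ge> 2" for n
    using that
  proof (induction n rule: less_induct)
    case (less n)
    show ?case
    proof (cases "n \<le> N")
      case True
      then have "\<bar>a n\<bar> / F n \<le> C"
        using initial[OF less.prems] by (simp add: C_def add_increasing)
      then show ?thesis
        using F[OF less.prems] by (simp add: pos_divide_le_eq)
    next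
      case False
      then have "N < n" by simp
      show ?thesis
        using rec[OF less.prems] w less.IH drift[OF \<open>N < n\<close>] q[OF \<open>N < n\<close>]
          C G[OF \<open>N < n\<close>]
        by (rule abs_le_by_drift_step[where a = a and F = F and w = w and n = n])
    qed
  qed
  then show ?thesis by blast
qed

lemma bigo_of_drift:
  fixes a q F G :: "nat \<Rightarrow> real" and w :: "nat \<Rightarrow> nat \<Rightarrow> real"
  assumes rec: "\<And>n. n \<ge> 2 \<Longrightarrow> a n = q n + (\<Sum>m=2..n-1. w n m * a m)"
    and w: "\<And>n m. 2 \<le> m \<Longrightarrow> m < n \<Longrightarrow> w n m \<ge> 0"
    and F: "\<And>n. n \<ge> 2 \<Longrightarrow> F n > 0"
    and c: "c > 0" and G: "eventually (\<lambda>n. G n \<ge> 0) sequentially"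
    and drift: "eventually (\<lambda>n. (\<Sum>m=2..n-1. w n m * F m) \<le> F n - c * G n) sequentially"
    and q: "q \<in> O(G)"
  shows "a \<in> O(F)"
proof -
  from q obtain K where "eventually (\<lambda>n. norm (q n) \<le> K * norm (G n)) sequentially"
    by (elim landau_o.bigE)
  with G drift have "eventually (\<lambda>n. \<bar>q n\<bar> \<le> K * G n \<and> G n \<ge> 0
      \<and> (\<Sum>m=2..n-1. w n m * F m) \<le> F n - c * G n) sequentially"
    by eventually_elim simp
  then obtain N where N: "\<And>n. n \<ge> N \<Longrightarrow> \<bar>q n\<bar> \<le> K * G n \<and> G n \<ge> 0
      \<and> (\<Sum>m=2..n-1. w n m * F m) \<le> F n - c * G n"
    unfolding eventually_sequentially by blast
  have "\<exists>C. \<forall>n\<ge>2. \<bar>a n\<bar> \<le> C * F n"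
  proof (rule bounded_by_drift_function[where N = N and G = G and K = K and c = c])
    show "\<bar>q n\<bar> \<le> K * G n" "G n \<ge> 0" "(\<Sum>m=2..n-1. w n m * F m) \<le> F n - c * G n"
      if "n > N" for n
      using N[of n] that by auto
  qed (use rec w F c in simp_all)
  then obtain C where C: "\<And>n. n \<ge> 2 \<Longrightarrow> \<bar>a n\<bar> \<le> C * F n"
    by blast
  have "eventually (\<lambda>n. norm (a n) \<le> C * norm (F n)) sequentially"
    using eventually_ge_at_top[of 2]
    by eventually_elim (use C F in \<open>simp add: less_imp_le\<close>)
  then show ?thesis
    by (rule bigoI)
qed

theorem lemma6p2:
  fixes b \<alpha> p :: real and a q :: "nat \<Rightarrow> real"
  assumes b_pos: "b > 0"
    and a1: "a 1 = 0"
    and rec: "\<And>n. n \<ge> 2 \<Longrightarrow> a n = q n + (\<Sum>m=2..n-1. p1 b n m * a m)"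
    and alpha_pos: "\<alpha> > 0" and p_nonneg: "p \<ge> 0"
    and q_bound: "q \<in> O(\<lambda>n. real n powr (\<alpha> - 1) / ln (real n) powr (p - 1))"
  shows "a \<in> O(\<lambda>n. real n powr \<alpha> / ln (real n) powr p)"
proof -
  define F where "F = (\<lambda>n::nat. power_log_ratio \<alpha> p (real n))"
  define G where "G = (\<lambda>n::nat. F n * ln (real n) / real n)"
  have F_pos: "F n > 0" if "n \<ge> 2" for n
    unfolding F_def using that by (intro power_log_ratio_pos) simp
  obtain c where "c > 0"
    and drift: "eventually (\<lambda>n. (\<Sum>m=2..n-1. p1 b n m * F m) \<le> F n - c * G n) sequentially"
    using eventually_p1_drift[OF b_pos alpha_pos p_nonneg] unfolding F_def G_def by blast
  have "eventually (\<lambda>n. real n powr (\<alpha> - 1) / ln (real n) powr (p - 1) = G n) sequentially"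
    using eventually_ge_at_top[of 2] by eventually_elim (simp add: G_def F_def power_log_ratio_shift)
  with q_bound have q_G: "q \<in> O(G)"
    using landau_o.big.cong by metis
  have G_nonneg: "eventually (\<lambda>n. G n \<ge> 0) sequentially"
    using eventually_ge_at_top[of 2]
    by eventually_elim (auto simp: G_def intro!: divide_nonneg_nonneg mult_nonneg_nonneg less_imp_le[OF F_pos])
  have "a \<in> O(F)"
  proof (rule bigo_of_drift[where w = "p1 b" and G = G and c = c])
    show "p1 b n m \<ge> 0" if "2 \<le> m" "m < n" for n m
      using that by (intro p1_nonneg[OF b_pos]) auto
  qed (fact rec F_pos \<open>c > 0\<close> G_nonneg drift q_G)+
  then show ?thesis
    by (simp add: F_def power_log_ratio_def)
qed

end
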